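(* Let $X$, $Y$, $Z$ be positive, absolutely continuous random variables with densities $f_X$, $f_Y$, $f_Z$, such that $X$ and $Y$ are independent and $Z \stackrel{d}{=} X/(X+Y)$ (so $Z$ takes values in $(0,1)$). Suppose that the density of $Y$ admits the decomposition $$f_Y(sx)=\mathbb{A}(s)\,\mathbb{B}(x)\,\mathbb{C}(sx),\qquad x,s>0,$$ for some positive real-valued functions $\mathbb{A},\mathbb{B},\mathbb{C}$ on $(0,\infty)$, where $$\mathbb{C}(x)=(1+\theta x)^{-p},\qquad x>0,$$ for some constants $\theta,p>0$. Then the density of $X$ is given, for $x>0$, by $$f_X(x)=\frac{\Gamma(p)}{x\,\mathbb{B}(x)}\;\mathcal{L}^{-1}\left\{ t^{1-p}\,\mathcal{L}^{-1}\left\{\frac{1}{s^{p}\,\mathbb{A}\!\left(\frac{1}{\theta s}\right)}\left(\frac{\theta s}{1+\theta s}\right)^2 f_Z\!\left(\frac{\theta s}{1+\theta s}\right)\right\}(t)\right\}(x).$$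
   Context: $\mathcal{L}$ denotes the Laplace transform, $\mathcal{L}\{g\}(s)=\int_0^\infty e^{-st}g(t)\,\mathrm{d}t$, and $\mathcal{L}^{-1}$ denotes the inverse Laplace transform: $\mathcal{L}^{-1}\{F\}$ is the function $g$ on $(0,\infty)$ with $\mathcal{L}\{g\}=F$. In the formula, the inner inverse Laplace transform is taken in the variable $s$ and evaluated at $t$, and the outer one is taken in the variable $t$ and evaluated at $x$. $\Gamma$ is the gamma function and $\stackrel{d}{=}$ means equality in distribution. *)

theory Defs
  imports "HOL-Probability.Probability"
begin

definition laplace :: "(real \<Rightarrow> real) \<Rightarrow> real \<Rightarrow> real" where
  "laplace g s = (LINT t:{0<..}|lborel. exp (- s * t) * g t)"

text \<open>g is an inverse Laplace transform of F: g is a Borel function on (0,inf) whose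
  Laplace integral converges (absolutely) for every s > 0 and L{g} = F
  (almost everywhere on (0,inf), since F may be built from densities, which are
  only determined up to null sets).\<close>
definition is_inv_laplace :: "(real \<Rightarrow> real) \<Rightarrow> (real \<Rightarrow> real) \<Rightarrow> bool" where
  "is_inv_laplace F g \<longleftrightarrow>
     g \<in> borel_measurable borel \<and>
     (\<forall>s>0. set_integrable lborel {0<..} (\<lambda>t. exp (- s * t) * g t)) \<and>
     (AE s in lborel. s > 0 \<longrightarrow> laplace g s = F s)"

end

theory Submission
  imports Defs
begin

text \<open>Let \<phi>(x) = x B(x) fX(x). The density of X/(\<theta> Y) can be computed in two ways: from the
  joint density fX(x) fY(y) of the independent pair, and from fZ, because X/(\<theta> Y) and
  Z/(\<theta> (1 - Z)) have the same distribution. Inserting the decomposition of fY into the first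
  expression produces the generalised Stieltjes transform S(s) = int_0^oo (s + x)^(-p) \<phi>(x) dx,
  so S agrees almost everywhere on (0, oo) with the function whose inverse Laplace transform is
  taken first. Since (s + x)^(-p) = Gamma(p)^(-1) int_0^oo t^(p-1) exp(-(s + x) t) dt, Tonelli's
  theorem exhibits S as the Laplace transform of h(t) = t^(p-1) L{\<phi>}(t) / Gamma(p); hence
  t^(1-p) h(t) is the Laplace transform of g = \<phi> / Gamma(p), and fX = Gamma(p) g / (x B(x)).
  All these transforms are finite because S is finite at a single point.\<close>

lemma nn_integral_finite_iff_absolutely_integrable:
  fixes k :: "real \<Rightarrow> real"
  assumes [measurable]: "A \<in> sets borel" "k \<in> borel_measurable borel"
    and nonneg: "\<And>x. x \<in> A \<Longrightarrow> k x \<ge> 0"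
  shows "(\<integral>\<^sup>+x\<in>A. ennreal (k x) \<partial>lborel) < \<infinity> \<longleftrightarrow> k absolutely_integrable_on A"
proof -
  have "(\<integral>\<^sup>+x\<in>A. ennreal (k x) \<partial>lborel) = (\<integral>\<^sup>+x. ennreal (norm (indicator A x *\<^sub>R k x)) \<partial>lborel)"
    using nonneg by (intro nn_integral_cong) (auto simp: indicator_def)
  moreover have "k absolutely_integrable_on A \<longleftrightarrow> set_integrable lborel A k"
    unfolding set_integrable_def by (rule integrable_completion) measurable
  ultimately show ?thesis
    by (simp add: integrable_iff_bounded set_integrable_def)
qed

lemma nn_integral_eq_integral_on:
  fixes k :: "real \<Rightarrow> real"
  assumes "k absolutely_integrable_on A" and "\<And>x. x \<in> A \<Longrightarrow> k x \<ge> 0"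
  shows "(\<integral>\<^sup>+x\<in>A. ennreal (k x) \<partial>lborel) = ennreal (integral A k)"
  using assms by (intro nn_integral_has_integral_lebesgue' integrable_integral set_lebesgue_integral_eq_integral(1))

lemma nn_integral_substitution_inj_on:
  fixes f g g' :: "real \<Rightarrow> real"
  assumes S: "S \<in> sets borel" and gS: "g ` S \<in> sets borel"
    and der: "\<And>x. x \<in> S \<Longrightarrow> (g has_real_derivative g' x) (at x)"
    and inj: "inj_on g S"
    and [measurable]: "f \<in> borel_measurable borel" "g \<in> borel_measurable borel"
      "g' \<in> borel_measurable borel"
    and nonneg: "\<And>y. y \<in> g ` S \<Longrightarrow> f y \<ge> 0"
  shows "(\<integral>\<^sup>+y\<in>g ` S. ennreal (f y) \<partial>lborel) =
         (\<integral>\<^sup>+x\<in>S. ennreal (\<bar>g' x\<bar> * f (g x)) \<partial>lborel)"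
proof -
  have nonneg': "\<And>x. x \<in> S \<Longrightarrow> \<bar>g' x\<bar> * f (g x) \<ge> 0"
    using nonneg by simp
  have change: "(\<lambda>x. \<bar>g' x\<bar> * f (g x)) absolutely_integrable_on S \<and>
      integral S (\<lambda>x. \<bar>g' x\<bar> * f (g x)) = b \<longleftrightarrow>
      f absolutely_integrable_on g ` S \<and> integral (g ` S) f = b" for b
    using S der inj
    by (intro has_absolute_integral_change_of_variables_1') (auto intro: has_field_derivative_at_within)
  show ?thesis
  proof (cases "f absolutely_integrable_on g ` S")
    case True
    with change have "(\<lambda>x. \<bar>g' x\<bar> * f (g x)) absolutely_integrable_on S"
      and "integral S (\<lambda>x. \<bar>g' x\<bar> * f (g x)) = integral (g ` S) f"
      by blast+
    with True show ?thesis
      using nonneg nonneg' by (simp add: nn_integral_eq_integral_on)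
  next
    case False
    with change have "\<not> (\<lambda>x. \<bar>g' x\<bar> * f (g x)) absolutely_integrable_on S"
      by blast
    with False have "(\<integral>\<^sup>+y\<in>g ` S. ennreal (f y) \<partial>lborel) = \<infinity>"
      and "(\<integral>\<^sup>+x\<in>S. ennreal (\<bar>g' x\<bar> * f (g x)) \<partial>lborel) = \<infinity>"
      using nn_integral_finite_iff_absolutely_integrable[of "g ` S" f]
        nn_integral_finite_iff_absolutely_integrable[of S "\<lambda>x. \<bar>g' x\<bar> * f (g x)"] nonneg nonneg' S gS
      by (simp_all add: less_top[symmetric])
    then show ?thesis
      by simp
  qed
qed

lemma nn_integral_reciprocal_substitution:
  fixes f :: "real \<Rightarrow> real" and a :: real
  assumes [measurable]: "f \<in> borel_measurable borel"
    and nonneg: "\<And>y. y > 0 \<Longrightarrow> f y \<ge> 0" and a: "a > 0"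
  shows "(\<integral>\<^sup>+y\<in>{0<..}. ennreal (f y) \<partial>lborel) =
         (\<integral>\<^sup>+s\<in>{0<..}. ennreal (a / s\<^sup>2 * f (a / s)) \<partial>lborel)"
proof -
  have image: "(\<lambda>s. a / s) ` {0<..} = {0<..}"
  proof safe
    fix y :: real assume "y > 0"
    then show "y \<in> (\<lambda>s. a / s) ` {0<..}"
      using a by (intro image_eqI[of _ _ "a / y"]) auto
  qed (use a in auto)
  have "(\<integral>\<^sup>+y\<in>(\<lambda>s. a / s) ` {0<..}. ennreal (f y) \<partial>lborel) =
        (\<integral>\<^sup>+s\<in>{0<..}. ennreal (\<bar>- a / s\<^sup>2\<bar> * f (a / s)) \<partial>lborel)"
    using a nonneg
    by (intro nn_integral_substitution_inj_on)
       (auto simp: image inj_on_def power2_eq_square intro!: derivative_eq_intros)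
  also have "\<dots> = (\<integral>\<^sup>+s\<in>{0<..}. ennreal (a / s\<^sup>2 * f (a / s)) \<partial>lborel)"
    using a by (intro nn_integral_cong) (auto simp: indicator_def)
  finally show ?thesis
    by (simp only: image)
qed

lemma nn_integral_odds_substitution:
  fixes f :: "real \<Rightarrow> real" and c :: real
  assumes [measurable]: "f \<in> borel_measurable borel"
    and nonneg: "\<And>w. 0 < w \<Longrightarrow> w < 1 \<Longrightarrow> f w \<ge> 0" and c: "c > 0"
  shows "(\<integral>\<^sup>+w\<in>{0<..<1}. ennreal (f w) \<partial>lborel) =
         (\<integral>\<^sup>+s\<in>{0<..}. ennreal (c / (1 + c * s)\<^sup>2 * f (c * s / (1 + c * s))) \<partial>lborel)"
proof -
  define odds where "odds s = c * s / (1 + c * s)" for s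
  have pos: "0 < c * s" "0 < 1 + c * s" if "s > 0" for s
    using c that by (simp_all add: add_pos_pos)
  have inverse: "odds s / (c * (1 - odds s)) = s" if "s > 0" for s
  proof -
    have "1 - odds s = 1 / (1 + c * s)"
      using pos[OF that] unfolding odds_def by (simp add: field_simps)
    then show ?thesis
      using c pos(2)[OF that] unfolding odds_def by simp
  qed
  have image: "odds ` {0<..} = {0<..<1}"
  proof (intro equalityI subsetI)
    fix w :: real assume "w \<in> odds ` {0<..}"
    then obtain s where "s > 0" "w = odds s" by auto
    then show "w \<in> {0<..<1}"
      using pos[of s] by (simp add: odds_def)
  next
    fix w :: real assume "w \<in> {0<..<1}"
    then show "w \<in> odds ` {0<..}"
      using c by (intro image_eqI[of _ _ "w / (c * (1 - w))"]) (auto simp: odds_def field_simps)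
  qed
  have "(\<integral>\<^sup>+w\<in>odds ` {0<..}. ennreal (f w) \<partial>lborel) =
        (\<integral>\<^sup>+s\<in>{0<..}. ennreal (\<bar>c / (1 + c * s)\<^sup>2\<bar> * f (odds s)) \<partial>lborel)"
  proof (rule nn_integral_substitution_inj_on)
    show "(odds has_real_derivative c / (1 + c * s)\<^sup>2) (at s)" if "s \<in> {0<..}" for s
      using pos[of s] that unfolding odds_def
      by (auto intro!: derivative_eq_intros simp: field_simps power2_eq_square)
    show "inj_on odds {0<..}"
      using inverse by (intro inj_on_inverseI[where g = "\<lambda>w. w / (c * (1 - w))"]) auto
    show "odds \<in> borel_measurable borel"
      unfolding odds_def by measurable
    show "(\<lambda>s. c / (1 + c * s)\<^sup>2) \<in> borel_measurable borel"
      by measurable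
    show "f y \<ge> 0" if "y \<in> odds ` {0<..}" for y
      using nonneg that by (simp add: image)
  qed (simp_all add: image)
  also have "\<dots> = (\<integral>\<^sup>+s\<in>{0<..}. ennreal (c / (1 + c * s)\<^sup>2 * f (c * s / (1 + c * s))) \<partial>lborel)"
    using c by (simp add: odds_def)
  finally show ?thesis
    by (simp only: image)
qed

lemma nn_integral_powr_exp:
  fixes a p :: real
  assumes a: "a > 0" and p: "p > 0"
  shows "(\<integral>\<^sup>+t\<in>{0<..}. ennreal (t powr (p - 1) * exp (- a * t)) \<partial>lborel) =
         ennreal (Gamma p * a powr - p)"
    (is "?I = _")
proof -
  have "ennreal (Gamma p) = (\<integral>\<^sup>+u. ennreal (indicator {0..} u * u powr (p - 1) / exp u) \<partial>lborel)"
    using Gamma_conv_nn_integral_real[OF p] .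
  also have "\<dots> = a * (\<integral>\<^sup>+t. ennreal (indicator {0..} (a * t) * (a * t) powr (p - 1) / exp (a * t)) \<partial>lborel)"
    using nn_integral_real_affine[of "\<lambda>u. ennreal (indicator {0..} u * u powr (p - 1) / exp u)" a 0] a
    by simp
  also have "(\<integral>\<^sup>+t. ennreal (indicator {0..} (a * t) * (a * t) powr (p - 1) / exp (a * t)) \<partial>lborel) =
      (\<integral>\<^sup>+t. ennreal (a powr (p - 1)) * (ennreal (t powr (p - 1) * exp (- a * t)) * indicator {0<..} t) \<partial>lborel)"
  proof (intro nn_integral_cong)
    fix t :: real
    show "ennreal (indicator {0..} (a * t) * (a * t) powr (p - 1) / exp (a * t)) =
        ennreal (a powr (p - 1)) * (ennreal (t powr (p - 1) * exp (- a * t)) * indicator {0<..} t)"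
    proof (cases "t > 0")
      case True
      then have "indicator {0..} (a * t) * (a * t) powr (p - 1) / exp (a * t) =
          a powr (p - 1) * (t powr (p - 1) * exp (- a * t))"
        using a by (simp add: powr_mult exp_minus field_split_simps)
      then show ?thesis
        using True a by (simp add: ennreal_mult)
    next
      case False
      then show ?thesis
        using a by (auto simp: indicator_def zero_le_mult_iff)
    qed
  qed
  also have "\<dots> = a powr (p - 1) * ?I"
    by (rule nn_integral_cmult) measurable
  finally have "ennreal (Gamma p) = ennreal (a powr p) * ?I"
    using a by (simp add: mult.assoc[symmetric] ennreal_mult'[symmetric] powr_mult_base)
  then have "ennreal (a powr - p) * ennreal (Gamma p) = ?I"
    using a by (simp add: mult.assoc[symmetric] ennreal_mult'[symmetric] powr_add[symmetric])
  then show ?thesis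
    using a Gamma_real_pos[OF p] by (simp add: ennreal_mult'[symmetric] mult.commute)
qed

definition nn_laplace :: "(real \<Rightarrow> real) \<Rightarrow> real \<Rightarrow> ennreal" where
  "nn_laplace \<phi> t = (\<integral>\<^sup>+x\<in>{0<..}. ennreal (exp (- t * x) * \<phi> x) \<partial>lborel)"

definition nn_stieltjes :: "real \<Rightarrow> (real \<Rightarrow> real) \<Rightarrow> real \<Rightarrow> ennreal" where
  "nn_stieltjes p \<phi> s = (\<integral>\<^sup>+x\<in>{0<..}. ennreal ((s + x) powr - p * \<phi> x) \<partial>lborel)"

lemma borel_measurable_nn_laplace [measurable]:
  assumes [measurable]: "\<phi> \<in> borel_measurable borel"
  shows "nn_laplace \<phi> \<in> borel_measurable borel"
  unfolding nn_laplace_def by measurable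

lemma nn_laplace_cmult:
  assumes [measurable]: "\<phi> \<in> borel_measurable borel" and "c \<ge> 0"
  shows "nn_laplace (\<lambda>x. c * \<phi> x) t = c * nn_laplace \<phi> t"
proof -
  have "nn_laplace (\<lambda>x. c * \<phi> x) t = (\<integral>\<^sup>+x. ennreal c * (ennreal (exp (- t * x) * \<phi> x) * indicator {0<..} x) \<partial>lborel)"
    unfolding nn_laplace_def using \<open>c \<ge> 0\<close>
    by (intro nn_integral_cong) (simp add: ennreal_mult' ac_simps)
  also have "\<dots> = c * nn_laplace \<phi> t"
    unfolding nn_laplace_def by (rule nn_integral_cmult) measurable
  finally show ?thesis .
qed

lemma is_inv_laplace_nn_laplace:
  assumes [measurable]: "\<phi> \<in> borel_measurable borel"
    and nonneg: "\<And>x. x > 0 \<Longrightarrow> \<phi> x \<ge> 0" and finite: "\<And>t. t > 0 \<Longrightarrow> nn_laplace \<phi> t < \<infinity>"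
  shows "is_inv_laplace (\<lambda>t. enn2real (nn_laplace \<phi> t)) \<phi>"
  unfolding is_inv_laplace_def
proof (intro conjI allI impI AE_I2)
  fix s :: real assume "s > 0"
  have eq: "nn_laplace \<phi> s = (\<integral>\<^sup>+t. ennreal (norm (indicator {0<..} t *\<^sub>R (exp (- s * t) * \<phi> t))) \<partial>lborel)"
    unfolding nn_laplace_def using nonneg by (intro nn_integral_cong) (auto simp: indicator_def)
  show "set_integrable lborel {0<..} (\<lambda>t. exp (- s * t) * \<phi> t)"
    unfolding set_integrable_def
  proof (rule integrableI_bounded)
    show "(\<integral>\<^sup>+t. ennreal (norm (indicator {0<..} t *\<^sub>R (exp (- s * t) * \<phi> t))) \<partial>lborel) < \<infinity>"
      using finite[OF \<open>s > 0\<close>] eq by simp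
  qed measurable
  have "laplace \<phi> s = enn2real (\<integral>\<^sup>+t. ennreal (indicator {0<..} t *\<^sub>R (exp (- s * t) * \<phi> t)) \<partial>lborel)"
    unfolding laplace_def set_lebesgue_integral_def
    using nonneg by (intro integral_eq_nn_integral AE_I2) (measurable, auto simp: indicator_def)
  also have "\<dots> = enn2real (nn_laplace \<phi> s)"
    using eq nonneg by (simp add: indicator_def)
  finally show "laplace \<phi> s = enn2real (nn_laplace \<phi> s)" .
qed measurable

lemma AE_lborel_pos_ex:
  fixes P :: "real \<Rightarrow> bool"
  assumes "AE s in lborel. s > 0 \<longrightarrow> P s"
  shows "\<exists>s>0. P s"
proof (rule ccontr)
  assume none: "\<not> (\<exists>s>0. P s)"
  have "AE s in lborel. s \<notin> {0<..1::real}"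
    using assms by eventually_elim (use none in auto)
  then have "emeasure lborel {0<..1::real} = 0"
    by (subst (asm) AE_iff_measurable[of "{0<..1::real}"]) auto
  then show False
    by simp
qed

lemma nn_stieltjes_finite:
  assumes [measurable]: "\<phi> \<in> borel_measurable borel"
    and nonneg: "\<And>x. x > 0 \<Longrightarrow> \<phi> x \<ge> 0" and p: "p > 0"
    and s0: "s0 > 0" "nn_stieltjes p \<phi> s0 < \<infinity>" and s: "s > 0"
  shows "nn_stieltjes p \<phi> s < \<infinity>"
proof -
  define m where "m = max 1 (s0 / s)"
  have m: "m \<ge> 1" "s0 \<le> m * s"
    using s by (auto simp: m_def field_simps max_def)
  have "(s + x) powr - p * \<phi> x \<le> m powr p * ((s0 + x) powr - p * \<phi> x)" if "x > 0" for x
  proof -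
    have "s0 + x \<le> m * (s + x)"
      using m that by (simp add: distrib_left) (smt (verit) mult_le_cancel_right1)
    then have "(s0 + x) powr p \<le> (m * (s + x)) powr p"
      using s0 that p by (intro powr_mono2) auto
    also have "\<dots> = m powr p * (s + x) powr p"
      using m s that by (simp add: powr_mult)
    finally have "(s + x) powr - p \<le> m powr p * (s0 + x) powr - p"
      using s0 s that m by (simp add: powr_minus field_simps)
    then show ?thesis
      using nonneg[OF that] by (simp add: mult_right_mono mult.assoc[symmetric])
  qed
  then have "nn_stieltjes p \<phi> s \<le> (\<integral>\<^sup>+x. m powr p * (ennreal ((s0 + x) powr - p * \<phi> x) * indicator {0<..} x) \<partial>lborel)"
    unfolding nn_stieltjes_def using m
    by (intro nn_integral_mono) (auto simp: indicator_def ennreal_mult'[symmetric] intro!: ennreal_leI)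
  also have "\<dots> = m powr p * nn_stieltjes p \<phi> s0"
    unfolding nn_stieltjes_def by (rule nn_integral_cmult) measurable
  also have "\<dots> < \<infinity>"
    using s0 by (simp add: ennreal_mult_less_top)
  finally show ?thesis .
qed

lemma nn_laplace_le_nn_stieltjes:
  assumes [measurable]: "\<phi> \<in> borel_measurable borel"
    and nonneg: "\<And>x. x > 0 \<Longrightarrow> \<phi> x \<ge> 0" and p: "p > 0" and t: "t > 0"
  shows "nn_laplace \<phi> t \<le> (p / t) powr p * nn_stieltjes p \<phi> (p / t)"
proof -
  define s where "s = p / t"
  have s: "s > 0"
    using p t by (simp add: s_def)
  have "exp (- t * x) \<le> s powr p * (s + x) powr - p" if "x > 0" for x
  proof -
    have "(1 + x / s) powr p \<le> exp (x / s) powr p"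
      using s that p by (intro powr_mono2) (auto simp: exp_ge_add_one_self)
    also have "\<dots> = exp (t * x)"
      using s p t by (simp add: exp_powr_real s_def field_simps)
    finally have bound: "(1 + x / s) powr p \<le> exp (t * x)" .
    have "(s + x) powr p = (s * (1 + x / s)) powr p"
      using s by (simp add: distrib_left)
    also have "\<dots> = s powr p * (1 + x / s) powr p"
      using s that by (simp add: powr_mult)
    also have "\<dots> \<le> s powr p * exp (t * x)"
      by (rule mult_left_mono[OF bound]) simp
    finally have "(s + x) powr p \<le> s powr p * exp (t * x)" .
    then show ?thesis
      using s that by (simp add: powr_minus exp_minus field_simps)
  qed
  then have "nn_laplace \<phi> t \<le> (\<integral>\<^sup>+x. s powr p * (ennreal ((s + x) powr - p * \<phi> x) * indicator {0<..} x) \<partial>lborel)"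
    unfolding nn_laplace_def using nonneg
    by (intro nn_integral_mono)
       (auto simp: indicator_def ennreal_mult'[symmetric] mult.assoc[symmetric] intro!: ennreal_leI mult_right_mono)
  also have "\<dots> = s powr p * nn_stieltjes p \<phi> s"
    unfolding nn_stieltjes_def by (rule nn_integral_cmult) measurable
  finally show ?thesis
    by (simp add: s_def)
qed

lemma nn_laplace_enn2real:
  assumes [measurable]: "\<phi> \<in> borel_measurable borel" and finite: "\<And>t. t > 0 \<Longrightarrow> nn_laplace \<phi> t < \<infinity>"
  shows "nn_laplace (\<lambda>t. t powr (p - 1) * enn2real (nn_laplace \<phi> t)) s =
    (\<integral>\<^sup>+t\<in>{0<..}. ennreal (t powr (p - 1) * exp (- s * t)) * nn_laplace \<phi> t \<partial>lborel)"
  unfolding nn_laplace_def[of "\<lambda>t. t powr (p - 1) * enn2real (nn_laplace \<phi> t)"]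
proof (intro nn_integral_cong)
  fix t :: real
  show "ennreal (exp (- s * t) * (t powr (p - 1) * enn2real (nn_laplace \<phi> t))) * indicator {0<..} t =
      ennreal (t powr (p - 1) * exp (- s * t)) * nn_laplace \<phi> t * indicator {0<..} t"
    using finite[of t] by (cases "t > 0") (simp_all add: ennreal_mult' ennreal_enn2real_if ac_simps)
qed

lemma nn_integral_powr_nn_laplace:
  assumes [measurable]: "\<phi> \<in> borel_measurable borel" and p: "p > 0" and s: "s > 0"
  shows "(\<integral>\<^sup>+t\<in>{0<..}. ennreal (t powr (p - 1) * exp (- s * t)) * nn_laplace \<phi> t \<partial>lborel) =
    Gamma p * nn_stieltjes p \<phi> s"
proof -
  define k where "k x t = ennreal (t powr (p - 1) * exp (- s * t)) * indicator {0<..} t *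
      (ennreal (exp (- t * x) * \<phi> x) * indicator {0<..} x)" for x t
  have [measurable]: "case_prod k \<in> borel_measurable (lborel \<Otimes>\<^sub>M lborel)"
    unfolding k_def by measurable
  have "(\<integral>\<^sup>+t\<in>{0<..}. ennreal (t powr (p - 1) * exp (- s * t)) * nn_laplace \<phi> t \<partial>lborel) =
      (\<integral>\<^sup>+t. \<integral>\<^sup>+x. k x t \<partial>lborel \<partial>lborel)"
    unfolding nn_laplace_def k_def
    by (intro nn_integral_cong) (simp add: nn_integral_cmult[symmetric] nn_integral_multc[symmetric] ac_simps)
  also have "\<dots> = (\<integral>\<^sup>+x. \<integral>\<^sup>+t. k x t \<partial>lborel \<partial>lborel)"
    by (rule lborel_pair.Fubini') measurable
  also have "\<dots> = (\<integral>\<^sup>+x. Gamma p * (ennreal ((s + x) powr - p * \<phi> x) * indicator {0<..} x) \<partial>lborel)"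
  proof (intro nn_integral_cong)
    fix x :: real
    show "(\<integral>\<^sup>+t. k x t \<partial>lborel) = Gamma p * (ennreal ((s + x) powr - p * \<phi> x) * indicator {0<..} x)"
    proof (cases "x > 0")
      case True
      have "exp (- (s + x) * t) = exp (- s * t) * exp (- t * x)" for t
        by (simp add: mult_exp_exp algebra_simps)
      then have "k x t = ennreal (t powr (p - 1) * exp (- (s + x) * t)) * indicator {0<..} t * ennreal (\<phi> x)" for t
        using True by (simp add: k_def ennreal_mult' ennreal_mult'' ac_simps)
      then have "(\<integral>\<^sup>+t. k x t \<partial>lborel) =
          (\<integral>\<^sup>+t\<in>{0<..}. ennreal (t powr (p - 1) * exp (- (s + x) * t)) \<partial>lborel) * ennreal (\<phi> x)"
        by (simp add: nn_integral_multc)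
      also have "\<dots> = Gamma p * ennreal ((s + x) powr - p * \<phi> x)"
        using True s p by (subst nn_integral_powr_exp) (auto simp: ennreal_mult'' ennreal_mult' ac_simps)
      finally show ?thesis
        using True by simp
    qed (simp add: k_def)
  qed
  also have "\<dots> = Gamma p * nn_stieltjes p \<phi> s"
    unfolding nn_stieltjes_def by (rule nn_integral_cmult) measurable
  finally show ?thesis .
qed

lemma is_inv_laplace_cong_AE:
  assumes "is_inv_laplace F g" and "AE s in lborel. s > 0 \<longrightarrow> F s = F' s"
  shows "is_inv_laplace F' g"
  using assms unfolding is_inv_laplace_def by (auto elim: AE_mp)

lemma is_inv_laplace_nn_stieltjes:
  assumes [measurable]: "\<phi> \<in> borel_measurable borel" and p: "p > 0"
    and laplace_finite: "\<And>t. t > 0 \<Longrightarrow> nn_laplace \<phi> t < \<infinity>"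
    and stieltjes_finite: "\<And>s. s > 0 \<Longrightarrow> nn_stieltjes p \<phi> s < \<infinity>"
  shows "is_inv_laplace (\<lambda>s. enn2real (nn_stieltjes p \<phi> s))
    (\<lambda>t. t powr (p - 1) / Gamma p * enn2real (nn_laplace \<phi> t))"
proof -
  define h where "h t = t powr (p - 1) / Gamma p * enn2real (nn_laplace \<phi> t)" for t
  define c where "c = 1 / Gamma p"
  have c: "c > 0"
    using Gamma_real_pos[OF p] by (simp add: c_def)
  have h_cmult: "h = (\<lambda>t. c * (t powr (p - 1) * enn2real (nn_laplace \<phi> t)))"
    by (simp add: h_def c_def fun_eq_iff)
  have nn_laplace_h: "nn_laplace h s = nn_stieltjes p \<phi> s" if "s > 0" for s
  proof -
    have "nn_laplace h s = c * nn_laplace (\<lambda>t. t powr (p - 1) * enn2real (nn_laplace \<phi> t)) s"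
      unfolding h_cmult using c by (intro nn_laplace_cmult) measurable
    also have "nn_laplace (\<lambda>t. t powr (p - 1) * enn2real (nn_laplace \<phi> t)) s = Gamma p * nn_stieltjes p \<phi> s"
      by (simp only: nn_laplace_enn2real[OF assms(1) laplace_finite] nn_integral_powr_nn_laplace[OF assms(1) p that])
    also have "ennreal c * (ennreal (Gamma p) * nn_stieltjes p \<phi> s) = nn_stieltjes p \<phi> s"
      using Gamma_real_pos[OF p] by (simp add: c_def mult.assoc[symmetric] flip: ennreal_mult')
    finally show ?thesis .
  qed
  have "is_inv_laplace (\<lambda>s. enn2real (nn_laplace h s)) h"
  proof (rule is_inv_laplace_nn_laplace)
    show "h \<in> borel_measurable borel"
      unfolding h_def by measurable
    show "h t \<ge> 0" if "t > 0" for t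
      using c by (simp add: h_cmult)
    show "nn_laplace h s < \<infinity>" if "s > 0" for s
      using that stieltjes_finite by (simp add: nn_laplace_h)
  qed
  then have "is_inv_laplace (\<lambda>s. enn2real (nn_stieltjes p \<phi> s)) h"
    by (rule is_inv_laplace_cong_AE) (simp add: nn_laplace_h)
  then show ?thesis
    unfolding h_def .
qed

lemma is_inv_laplace_iterated:
  fixes \<phi> F :: "real \<Rightarrow> real" and p :: real
  assumes [measurable]: "\<phi> \<in> borel_measurable borel"
    and nonneg: "\<And>x. x > 0 \<Longrightarrow> \<phi> x \<ge> 0" and p: "p > 0"
    and F_nonneg: "\<And>s. s > 0 \<Longrightarrow> F s \<ge> 0"
    and stieltjes: "AE s in lborel. s > 0 \<longrightarrow> nn_stieltjes p \<phi> s = ennreal (F s)"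
  defines "h \<equiv> \<lambda>t. t powr (p - 1) / Gamma p * enn2real (nn_laplace \<phi> t)"
  shows "is_inv_laplace F h" and "is_inv_laplace (\<lambda>t. t powr (1 - p) * h t) (\<lambda>x. \<phi> x / Gamma p)"
proof -
  obtain s0 where s0: "s0 > 0" "nn_stieltjes p \<phi> s0 = ennreal (F s0)"
    using AE_lborel_pos_ex[OF stieltjes] by blast
  have stieltjes_finite: "nn_stieltjes p \<phi> s < \<infinity>" if "s > 0" for s
    using nonneg p s0 that by (intro nn_stieltjes_finite[of \<phi> p s0 s]) auto
  have laplace_finite: "nn_laplace \<phi> t < \<infinity>" if "t > 0" for t
  proof -
    have "nn_laplace \<phi> t \<le> (p / t) powr p * nn_stieltjes p \<phi> (p / t)"
      using nonneg p that by (intro nn_laplace_le_nn_stieltjes) auto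
    also have "\<dots> < \<infinity>"
      using stieltjes_finite p that by (simp add: ennreal_mult_less_top)
    finally show ?thesis .
  qed
  have "is_inv_laplace (\<lambda>s. enn2real (nn_stieltjes p \<phi> s)) h"
    unfolding h_def using p laplace_finite stieltjes_finite by (intro is_inv_laplace_nn_stieltjes) auto
  then show "is_inv_laplace F h"
    by (rule is_inv_laplace_cong_AE) (use stieltjes F_nonneg in \<open>auto elim: AE_mp\<close>)
  define c where "c = 1 / Gamma p"
  have c: "c > 0"
    using Gamma_real_pos[OF p] by (simp add: c_def)
  have "is_inv_laplace (\<lambda>t. enn2real (nn_laplace (\<lambda>x. c * \<phi> x) t)) (\<lambda>x. c * \<phi> x)"
    using c nonneg laplace_finite
    by (intro is_inv_laplace_nn_laplace) (simp_all add: nn_laplace_cmult ennreal_mult_less_top)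
  moreover have "enn2real (nn_laplace (\<lambda>x. c * \<phi> x) t) = t powr (1 - p) * h t" if "t > 0" for t
  proof -
    have "enn2real (nn_laplace (\<lambda>x. c * \<phi> x) t) = c * enn2real (nn_laplace \<phi> t)"
      using c by (simp add: nn_laplace_cmult enn2real_mult)
    also have "\<dots> = t powr (1 - p) * t powr (p - 1) * (c * enn2real (nn_laplace \<phi> t))"
      using that by (simp flip: powr_add)
    also have "\<dots> = t powr (1 - p) * h t"
      by (simp add: h_def c_def)
    finally show ?thesis .
  qed
  ultimately show "is_inv_laplace (\<lambda>t. t powr (1 - p) * h t) (\<lambda>x. \<phi> x / Gamma p)"
    by (auto simp: c_def intro: is_inv_laplace_cong_AE)
qed

lemma emeasure_distr_odds_preimage:
  fixes Z :: "'a \<Rightarrow> real" and fZ :: "real \<Rightarrow> real" and c :: real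
  assumes dZ: "distributed M lborel Z (\<lambda>w. ennreal (fZ w))"
    and nonneg: "\<And>w. fZ w \<ge> 0" and c: "c > 0" and [measurable]: "T \<in> sets borel"
  shows "emeasure (distr M borel Z) {w. 0 < w \<and> w < 1 \<and> w / (c * (1 - w)) \<in> T} =
    (\<integral>\<^sup>+s\<in>T \<inter> {0<..}. ennreal (c / (1 + c * s)\<^sup>2 * fZ (c * s / (1 + c * s))) \<partial>lborel)"
proof -
  define ST where "ST = {w. 0 < w \<and> w < 1 \<and> w / (c * (1 - w)) \<in> T}"
  have [measurable]: "ST \<in> sets borel" "fZ \<in> borel_measurable borel" "Z \<in> borel_measurable M"
    using distributed_real_measurable[OF nonneg dZ] distributed_measurable[OF dZ]
    unfolding ST_def by (measurable, simp_all)
  have odds_in_ST: "c * s / (1 + c * s) \<in> ST \<longleftrightarrow> s \<in> T" if "s > 0" for s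
  proof -
    have pos: "0 < c * s" "0 < 1 + c * s"
      using c that by (simp_all add: add_pos_pos)
    moreover have "1 - c * s / (1 + c * s) = 1 / (1 + c * s)"
      using pos by (simp add: field_simps)
    ultimately show ?thesis
      using c by (simp add: ST_def)
  qed
  have "emeasure (distr M borel Z) ST = (\<integral>\<^sup>+w. ennreal (fZ w) * indicator ST w \<partial>lborel)"
    by (subst emeasure_distr) (auto intro: distributed_emeasure[OF dZ])
  also have "\<dots> = (\<integral>\<^sup>+w\<in>{0<..<1}. ennreal (fZ w * indicator ST w) \<partial>lborel)"
    by (intro nn_integral_cong) (auto simp: ST_def indicator_def)
  also have "\<dots> = (\<integral>\<^sup>+s\<in>{0<..}. ennreal (c / (1 + c * s)\<^sup>2 *
      (fZ (c * s / (1 + c * s)) * indicator ST (c * s / (1 + c * s)))) \<partial>lborel)"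
    using nonneg c by (intro nn_integral_odds_substitution) auto
  also have "\<dots> = (\<integral>\<^sup>+s\<in>T \<inter> {0<..}. ennreal (c / (1 + c * s)\<^sup>2 * fZ (c * s / (1 + c * s))) \<partial>lborel)"
    using odds_in_ST by (intro nn_integral_cong) (auto simp: indicator_def)
  finally show ?thesis
    by (simp add: ST_def)
qed

lemma nn_integral_quotient_slice:
  fixes f :: "real \<Rightarrow> real"
  assumes [measurable]: "f \<in> borel_measurable borel" "T \<in> sets borel"
    and nonneg: "\<And>y. f y \<ge> 0" and c: "c > 0" and x: "x > 0"
  shows "(\<integral>\<^sup>+y\<in>{0<..}. ennreal (f y * indicator T (x / (c * y))) \<partial>lborel) =
    (\<integral>\<^sup>+s\<in>T \<inter> {0<..}. ennreal (x / (c * s\<^sup>2) * f (x / (c * s))) \<partial>lborel)"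
proof -
  have "(\<integral>\<^sup>+y\<in>{0<..}. ennreal (f y * indicator T (x / (c * y))) \<partial>lborel) =
      (\<integral>\<^sup>+s\<in>{0<..}. ennreal (x / c / s\<^sup>2 * (f (x / c / s) * indicator T (x / (c * (x / c / s))))) \<partial>lborel)"
    using c x nonneg by (intro nn_integral_reciprocal_substitution) auto
  also have "\<dots> = (\<integral>\<^sup>+s\<in>T \<inter> {0<..}. ennreal (x / (c * s\<^sup>2) * f (x / (c * s))) \<partial>lborel)"
    using c x by (intro nn_integral_cong) (auto simp: indicator_def)
  finally show ?thesis .
qed

lemma (in prob_space) emeasure_indep_quotient:
  fixes X Y :: "'a \<Rightarrow> real" and fX fY :: "real \<Rightarrow> real" and c :: real
  assumes dX: "distributed M lborel X (\<lambda>x. ennreal (fX x))" and nonneg_X: "\<And>x. fX x \<ge> 0"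
    and dY: "distributed M lborel Y (\<lambda>y. ennreal (fY y))" and nonneg_Y: "\<And>y. fY y \<ge> 0"
    and indep: "indep_var borel X borel Y" and c: "c > 0" and [measurable]: "T \<in> sets borel"
  shows "emeasure M {\<omega> \<in> space M. 0 < X \<omega> \<and> 0 < Y \<omega> \<and> X \<omega> / (c * Y \<omega>) \<in> T} =
    (\<integral>\<^sup>+s\<in>T \<inter> {0<..}. (\<integral>\<^sup>+x\<in>{0<..}. ennreal (x / (c * s\<^sup>2) * fX x * fY (x / (c * s))) \<partial>lborel) \<partial>lborel)"
proof -
  have [measurable]: "fX \<in> borel_measurable borel" "fY \<in> borel_measurable borel"
    using distributed_real_measurable[OF nonneg_X dX] distributed_real_measurable[OF nonneg_Y dY] by simp_all
  define R where "R = {(x, y). 0 < x \<and> 0 < y \<and> x / (c * y) \<in> T}"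
  have "R = {z \<in> space (lborel \<Otimes>\<^sub>M lborel). 0 < fst z \<and> 0 < snd z \<and> fst z / (c * snd z) \<in> T}"
    by (auto simp: R_def space_pair_measure)
  also have "\<dots> \<in> sets (lborel \<Otimes>\<^sub>M lborel)"
    by measurable
  finally have R_sets [measurable]: "R \<in> sets (lborel \<Otimes>\<^sub>M lborel)" .
  have "indep_var lborel X lborel Y"
    using indep unfolding indep_var_def indep_vars_def
    by (simp add: case_bool_if cong: if_cong)
  then have joint: "distributed M (lborel \<Otimes>\<^sub>M lborel) (\<lambda>\<omega>. (X \<omega>, Y \<omega>)) (\<lambda>(x, y). ennreal (fX x) * ennreal (fY y))"
    using dX dY by (intro distributed_joint_indep) (auto intro: lborel.sigma_finite_measure_axioms)
  have slice: "(\<integral>\<^sup>+y. ennreal (fX x) * ennreal (fY y) * indicator R (x, y) \<partial>lborel) =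
      (\<integral>\<^sup>+s\<in>T \<inter> {0<..}. ennreal (x / (c * s\<^sup>2) * fX x * fY (x / (c * s))) * indicator {0<..} x \<partial>lborel)" for x
  proof (cases "x > 0")
    case True
    have "(\<integral>\<^sup>+y. ennreal (fX x) * ennreal (fY y) * indicator R (x, y) \<partial>lborel) =
        ennreal (fX x) * (\<integral>\<^sup>+y\<in>{0<..}. ennreal (fY y * indicator T (x / (c * y))) \<partial>lborel)"
      using True by (subst nn_integral_cmult[symmetric]) (auto intro!: nn_integral_cong simp: R_def indicator_def)
    also have "(\<integral>\<^sup>+y\<in>{0<..}. ennreal (fY y * indicator T (x / (c * y))) \<partial>lborel) =
        (\<integral>\<^sup>+s\<in>T \<inter> {0<..}. ennreal (x / (c * s\<^sup>2) * fY (x / (c * s))) \<partial>lborel)"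
      by (rule nn_integral_quotient_slice[OF _ _ nonneg_Y c True]; measurable)
    also have "ennreal (fX x) * \<dots> =
        (\<integral>\<^sup>+s\<in>T \<inter> {0<..}. ennreal (x / (c * s\<^sup>2) * fX x * fY (x / (c * s))) * indicator {0<..} x \<partial>lborel)"
      using True c nonneg_X
      by (subst nn_integral_cmult[symmetric])
         (auto intro!: nn_integral_cong simp: indicator_def ennreal_mult'[symmetric] field_simps)
    finally show ?thesis .
  qed (simp add: R_def)
  have "emeasure M {\<omega> \<in> space M. 0 < X \<omega> \<and> 0 < Y \<omega> \<and> X \<omega> / (c * Y \<omega>) \<in> T} =
      emeasure M ((\<lambda>\<omega>. (X \<omega>, Y \<omega>)) -` R \<inter> space M)"
    by (rule arg_cong[where f = "emeasure M"]) (auto simp: R_def)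
  also have "\<dots> = (\<integral>\<^sup>+(x, y). ennreal (fX x) * ennreal (fY y) * indicator R (x, y) \<partial>(lborel \<Otimes>\<^sub>M lborel))"
    using distributed_emeasure[OF joint R_sets] by (simp add: case_prod_beta')
  also have "\<dots> = (\<integral>\<^sup>+x. (\<integral>\<^sup>+s\<in>T \<inter> {0<..}. ennreal (x / (c * s\<^sup>2) * fX x * fY (x / (c * s))) * indicator {0<..} x \<partial>lborel) \<partial>lborel)"
    by (simp add: lborel.nn_integral_fst[symmetric] slice)
  also have "\<dots> = (\<integral>\<^sup>+s\<in>T \<inter> {0<..}. (\<integral>\<^sup>+x\<in>{0<..}. ennreal (x / (c * s\<^sup>2) * fX x * fY (x / (c * s))) \<partial>lborel) \<partial>lborel)"
    by (subst lborel_pair.Fubini') (simp_all add: nn_integral_multc)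
  finally show ?thesis .
qed

lemma (in prob_space) nn_integral_odds_density_eq_quotient_density:
  fixes X Y Z :: "'a \<Rightarrow> real" and fX fY fZ :: "real \<Rightarrow> real" and c :: real
  assumes dX: "distributed M lborel X (\<lambda>x. ennreal (fX x))" and nonneg_X: "\<And>x. fX x \<ge> 0"
    and dY: "distributed M lborel Y (\<lambda>y. ennreal (fY y))" and nonneg_Y: "\<And>y. fY y \<ge> 0"
    and dZ: "distributed M lborel Z (\<lambda>z. ennreal (fZ z))" and nonneg_Z: "\<And>z. fZ z \<ge> 0"
    and pos_X: "AE \<omega> in M. X \<omega> > 0" and pos_Y: "AE \<omega> in M. Y \<omega> > 0"
    and indep: "indep_var borel X borel Y"
    and Z_eq: "distr M borel Z = distr M borel (\<lambda>\<omega>. X \<omega> / (X \<omega> + Y \<omega>))"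
    and c: "c > 0" and [measurable]: "T \<in> sets borel"
  shows "(\<integral>\<^sup>+s\<in>T \<inter> {0<..}. ennreal (c / (1 + c * s)\<^sup>2 * fZ (c * s / (1 + c * s))) \<partial>lborel) =
    (\<integral>\<^sup>+s\<in>T \<inter> {0<..}. (\<integral>\<^sup>+x\<in>{0<..}. ennreal (x / (c * s\<^sup>2) * fX x * fY (x / (c * s))) \<partial>lborel) \<partial>lborel)"
proof -
  have [measurable]: "X \<in> borel_measurable M" "Y \<in> borel_measurable M"
    using distributed_measurable[OF dX] distributed_measurable[OF dY] by simp_all
  \<comment> \<open>The map w \<mapsto> w / (c (1 - w)) sends X / (X + Y) to X / (c Y).\<close>
  define ST where "ST = {w. 0 < w \<and> w < 1 \<and> w / (c * (1 - w)) \<in> T}"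
  have [measurable]: "ST \<in> sets borel"
    unfolding ST_def by measurable
  have ratio_in_ST: "x / (x + y) \<in> ST \<longleftrightarrow> x / (c * y) \<in> T" if "x > 0" "y > 0" for x y
  proof -
    have "1 - x / (x + y) = y / (x + y)"
      using that by (simp add: field_simps)
    then show ?thesis
      using that by (simp add: ST_def)
  qed
  have "(\<integral>\<^sup>+s\<in>T \<inter> {0<..}. ennreal (c / (1 + c * s)\<^sup>2 * fZ (c * s / (1 + c * s))) \<partial>lborel) =
      emeasure (distr M borel Z) ST"
    unfolding ST_def using dZ nonneg_Z c by (simp add: emeasure_distr_odds_preimage)
  also have "\<dots> = emeasure M ((\<lambda>\<omega>. X \<omega> / (X \<omega> + Y \<omega>)) -` ST \<inter> space M)"
    unfolding Z_eq by (rule emeasure_distr) measurable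
  also have "\<dots> = emeasure M {\<omega> \<in> space M. 0 < X \<omega> \<and> 0 < Y \<omega> \<and> X \<omega> / (c * Y \<omega>) \<in> T}"
    using pos_X pos_Y by (intro emeasure_eq_AE) (auto simp: ratio_in_ST)
  also have "\<dots> = (\<integral>\<^sup>+s\<in>T \<inter> {0<..}. (\<integral>\<^sup>+x\<in>{0<..}. ennreal (x / (c * s\<^sup>2) * fX x * fY (x / (c * s))) \<partial>lborel) \<partial>lborel)"
    using dX nonneg_X dY nonneg_Y indep c by (simp add: emeasure_indep_quotient)
  finally show ?thesis .
qed

lemma (in prob_space) odds_density_eq_quotient_density:
  fixes X Y Z :: "'a \<Rightarrow> real" and fX fY fZ :: "real \<Rightarrow> real" and c :: real
  assumes dX: "distributed M lborel X (\<lambda>x. ennreal (fX x))" and nonneg_X: "\<And>x. fX x \<ge> 0"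
    and dY: "distributed M lborel Y (\<lambda>y. ennreal (fY y))" and nonneg_Y: "\<And>y. fY y \<ge> 0"
    and dZ: "distributed M lborel Z (\<lambda>z. ennreal (fZ z))" and nonneg_Z: "\<And>z. fZ z \<ge> 0"
    and pos_X: "AE \<omega> in M. X \<omega> > 0" and pos_Y: "AE \<omega> in M. Y \<omega> > 0"
    and indep: "indep_var borel X borel Y"
    and Z_eq: "distr M borel Z = distr M borel (\<lambda>\<omega>. X \<omega> / (X \<omega> + Y \<omega>))"
    and c: "c > 0"
  shows "AE s in lborel. s > 0 \<longrightarrow> ennreal (c / (1 + c * s)\<^sup>2 * fZ (c * s / (1 + c * s))) =
    (\<integral>\<^sup>+x\<in>{0<..}. ennreal (x / (c * s\<^sup>2) * fX x * fY (x / (c * s))) \<partial>lborel)"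
proof -
  have [measurable]: "fX \<in> borel_measurable borel" "fY \<in> borel_measurable borel" "fZ \<in> borel_measurable borel"
    using distributed_real_measurable[OF nonneg_X dX] distributed_real_measurable[OF nonneg_Y dY]
      distributed_real_measurable[OF nonneg_Z dZ] by simp_all
  define u where "u s = ennreal (c / (1 + c * s)\<^sup>2 * fZ (c * s / (1 + c * s))) * indicator {0<..} s" for s
  define v where "v s = (\<integral>\<^sup>+x\<in>{0<..}. ennreal (x / (c * s\<^sup>2) * fX x * fY (x / (c * s))) \<partial>lborel) *
      indicator {0<..} s" for s
  have [measurable]: "u \<in> borel_measurable borel" "v \<in> borel_measurable borel"
    unfolding u_def v_def by measurable
  have "density lborel u = density lborel v"
  proof (rule measure_eqI)
    fix T assume "T \<in> sets (density lborel u)"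
    then have T: "T \<in> sets borel"
      by simp
    have "(\<integral>\<^sup>+s\<in>T. u s \<partial>lborel) =
        (\<integral>\<^sup>+s\<in>T \<inter> {0<..}. ennreal (c / (1 + c * s)\<^sup>2 * fZ (c * s / (1 + c * s))) \<partial>lborel)"
      by (intro nn_integral_cong) (simp add: u_def split: split_indicator)
    also have "\<dots> = (\<integral>\<^sup>+s\<in>T \<inter> {0<..}.
        (\<integral>\<^sup>+x\<in>{0<..}. ennreal (x / (c * s\<^sup>2) * fX x * fY (x / (c * s))) \<partial>lborel) \<partial>lborel)"
      by (rule nn_integral_odds_density_eq_quotient_density[OF assms T])
    also have "\<dots> = (\<integral>\<^sup>+s\<in>T. v s \<partial>lborel)"
      by (intro nn_integral_cong) (simp add: v_def split: split_indicator)
    finally have "(\<integral>\<^sup>+s\<in>T. u s \<partial>lborel) = (\<integral>\<^sup>+s\<in>T. v s \<partial>lborel)" .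
    with T show "emeasure (density lborel u) T = emeasure (density lborel v) T"
      by (simp add: emeasure_density)
  qed simp
  then have "AE s in lborel. u s = v s"
    by (rule sigma_finite_measure.density_unique[OF lborel.sigma_finite_measure_axioms, rotated 2]) auto
  then show ?thesis
    by eventually_elim (auto simp: u_def v_def split: split_indicator_asm)
qed

text \<open>B is not assumed to be measurable; the decomposition of fY at s = 1 provides a measurable
  representative of x B(x) fX(x) on (0, oo).\<close>

lemma measurable_weight_ex:
  fixes fX fY B :: "real \<Rightarrow> real" and a \<theta> p :: real
  assumes [measurable]: "fX \<in> borel_measurable borel" "fY \<in> borel_measurable borel"
    and a: "a > 0" and \<theta>: "\<theta> > 0"
    and fY_eq: "\<And>x. x > 0 \<Longrightarrow> fY x = a * B x * (1 + \<theta> * x) powr - p"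
  shows "\<exists>\<phi> \<in> borel_measurable borel. \<forall>x>0. \<phi> x = x * B x * fX x"
proof
  show "(\<lambda>x. x * fX x * fY x * (1 + \<theta> * x) powr p / a) \<in> borel_measurable borel"
    by measurable
  show "\<forall>x>0. x * fX x * fY x * (1 + \<theta> * x) powr p / a = x * B x * fX x"
  proof (intro allI impI)
    fix x :: real assume "x > 0"
    then have "1 + \<theta> * x > 0"
      using \<theta> by (simp add: add_pos_pos)
    then have "(1 + \<theta> * x) powr - p * (1 + \<theta> * x) powr p = 1"
      by (simp flip: powr_add)
    then show "x * fX x * fY x * (1 + \<theta> * x) powr p / a = x * B x * fX x"
      using fY_eq[OF \<open>x > 0\<close>] a by simp
  qed
qed

lemma nn_stieltjes_eq_odds_density:
  fixes \<phi> fX fY fZ A B :: "real \<Rightarrow> real" and \<theta> p s :: real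
  assumes [measurable]: "\<phi> \<in> borel_measurable borel"
    and \<theta>: "\<theta> > 0" and A_pos: "\<And>s. s > 0 \<Longrightarrow> A s > 0"
    and decomposition: "\<And>x s. x > 0 \<Longrightarrow> s > 0 \<Longrightarrow> fY (s * x) = A s * B x * (1 + \<theta> * (s * x)) powr - p"
    and \<phi>: "\<And>x. x > 0 \<Longrightarrow> \<phi> x = x * B x * fX x" and s: "s > 0"
    and odds_density: "ennreal (\<theta> / (1 + \<theta> * s)\<^sup>2 * fZ (\<theta> * s / (1 + \<theta> * s))) =
      (\<integral>\<^sup>+x\<in>{0<..}. ennreal (x / (\<theta> * s\<^sup>2) * fX x * fY (x / (\<theta> * s))) \<partial>lborel)"
  shows "nn_stieltjes p \<phi> s =
    ennreal (1 / (s powr p * A (1 / (\<theta> * s))) * ((\<theta> * s) / (1 + \<theta> * s))\<^sup>2 * fZ ((\<theta> * s) / (1 + \<theta> * s)))"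
proof -
  define k where "k = s powr p * A (1 / (\<theta> * s)) / (\<theta> * s\<^sup>2)"
  have k: "k > 0"
    using \<theta> s A_pos[of "1 / (\<theta> * s)"] by (simp add: k_def)
  have integrand: "x / (\<theta> * s\<^sup>2) * fX x * fY (x / (\<theta> * s)) = k * ((s + x) powr - p * \<phi> x)" if "x > 0" for x
  proof -
    have "1 + \<theta> * (1 / (\<theta> * s) * x) = (s + x) / s"
      using \<theta> s by (simp add: field_simps)
    then have "fY (x / (\<theta> * s)) = A (1 / (\<theta> * s)) * B x * (s powr p * (s + x) powr - p)"
      using decomposition[of x "1 / (\<theta> * s)"] \<theta> s that by (simp add: powr_divide powr_minus field_simps)
    then show ?thesis
      using \<phi>[OF that] s that by (simp add: k_def power2_eq_square field_simps)
  qed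
  have "ennreal (\<theta> / (1 + \<theta> * s)\<^sup>2 * fZ (\<theta> * s / (1 + \<theta> * s))) = ennreal k * nn_stieltjes p \<phi> s"
    using odds_density s k integrand unfolding nn_stieltjes_def
    by (subst nn_integral_cmult[symmetric]) (auto intro!: nn_integral_cong simp: ennreal_mult' split: split_indicator)
  then have "nn_stieltjes p \<phi> s = ennreal (1 / k) * ennreal (\<theta> / (1 + \<theta> * s)\<^sup>2 * fZ (\<theta> * s / (1 + \<theta> * s)))"
    using k by (simp add: mult.assoc[symmetric] flip: ennreal_mult')
  also have "\<dots> = ennreal (1 / (s powr p * A (1 / (\<theta> * s))) * ((\<theta> * s) / (1 + \<theta> * s))\<^sup>2 * fZ ((\<theta> * s) / (1 + \<theta> * s)))"
    using k \<theta> s A_pos[of "1 / (\<theta> * s)"] by (simp add: k_def field_simps power2_eq_square flip: ennreal_mult')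
  finally show ?thesis .
qed

theorem corollary1:
  fixes M :: "'a measure"
    and X Y Z :: "'a \<Rightarrow> real"
    and fX fY fZ :: "real \<Rightarrow> real"
    and A B C :: "real \<Rightarrow> real"
    and \<theta> p :: real
  assumes "prob_space M"
    and "\<forall>x. fX x \<ge> 0" and "\<forall>x. fY x \<ge> 0" and "\<forall>x. fZ x \<ge> 0"
    and "distributed M lborel X (\<lambda>x. ennreal (fX x))"
    and "distributed M lborel Y (\<lambda>x. ennreal (fY x))"
    and "distributed M lborel Z (\<lambda>x. ennreal (fZ x))"
    and "AE \<omega> in M. X \<omega> > 0"
    and "AE \<omega> in M. Y \<omega> > 0"
    and "AE \<omega> in M. Z \<omega> > 0"
    and "prob_space.indep_var M borel X borel Y"
    and "distr M borel Z = distr M borel (\<lambda>\<omega>. X \<omega> / (X \<omega> + Y \<omega>))"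
    and "\<forall>x>0. A x > 0" and "\<forall>x>0. B x > 0" and "\<forall>x>0. C x > 0"
    and "\<forall>x>0. \<forall>s>0. fY (s * x) = A s * B x * C (s * x)"
    and "\<theta> > 0" and "p > 0"
    and "\<forall>x>0. C x = (1 + \<theta> * x) powr (- p)"
  shows "\<exists>h g.
     is_inv_laplace
       (\<lambda>s. 1 / (s powr p * A (1 / (\<theta> * s))) * ((\<theta> * s) / (1 + \<theta> * s))\<^sup>2
             * fZ ((\<theta> * s) / (1 + \<theta> * s))) h
   \<and> is_inv_laplace (\<lambda>t. t powr (1 - p) * h t) g
   \<and> (AE x in lborel. x > 0 \<longrightarrow> fX x = Gamma p / (x * B x) * g x)"
proof -
  interpret prob_space M by fact
  have densities_measurable: "fX \<in> borel_measurable borel" "fY \<in> borel_measurable borel"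
    using distributed_real_measurable[OF assms(2)[rule_format] assms(5)]
      distributed_real_measurable[OF assms(3)[rule_format] assms(6)] by simp_all
  have \<theta>: "\<theta> > 0" and p: "p > 0" and A_pos: "\<And>s. s > 0 \<Longrightarrow> A s > 0"
    using assms(13,17,18) by auto
  have decomposition: "fY (s * x) = A s * B x * (1 + \<theta> * (s * x)) powr - p" if "x > 0" "s > 0" for x s
    using assms(16,19) that by simp
  have "\<exists>\<phi> \<in> borel_measurable borel. \<forall>x>0. \<phi> x = x * B x * fX x"
    by (rule measurable_weight_ex[OF densities_measurable A_pos[OF zero_less_one] \<theta>, of B p])
       (use decomposition[of _ 1] in simp)
  then obtain \<phi> where \<phi>_measurable: "\<phi> \<in> borel_measurable borel" and \<phi>_eq: "\<And>x. x > 0 \<Longrightarrow> \<phi> x = x * B x * fX x"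
    by blast
  define F where "F = (\<lambda>s. 1 / (s powr p * A (1 / (\<theta> * s))) * ((\<theta> * s) / (1 + \<theta> * s))\<^sup>2
      * fZ ((\<theta> * s) / (1 + \<theta> * s)))"
  have "AE s in lborel. s > 0 \<longrightarrow> ennreal (\<theta> / (1 + \<theta> * s)\<^sup>2 * fZ (\<theta> * s / (1 + \<theta> * s))) =
      (\<integral>\<^sup>+x\<in>{0<..}. ennreal (x / (\<theta> * s\<^sup>2) * fX x * fY (x / (\<theta> * s))) \<partial>lborel)"
    using assms(2-4)
    by (intro odds_density_eq_quotient_density[OF assms(5) _ assms(6) _ assms(7) _ assms(8,9,11,12) \<theta>]) auto
  then have stieltjes: "AE s in lborel. s > 0 \<longrightarrow> nn_stieltjes p \<phi> s = ennreal (F s)"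
  proof eventually_elim
    case (elim s)
    then show ?case
      using nn_stieltjes_eq_odds_density[OF \<phi>_measurable \<theta> A_pos decomposition \<phi>_eq, where s = s and fZ = fZ]
      by (simp add: F_def)
  qed
  have \<phi>_nonneg: "\<phi> x \<ge> 0" and F_nonneg: "F x \<ge> 0" if "x > 0" for x
    using \<phi>_eq[OF that] A_pos[of "1 / (\<theta> * x)"] \<theta> assms(2,4,14) that by (simp_all add: F_def less_imp_le)
  note inverses = is_inv_laplace_iterated[OF \<phi>_measurable \<phi>_nonneg p F_nonneg stieltjes]
  have "AE x in lborel. x > 0 \<longrightarrow> fX x = Gamma p / (x * B x) * (\<phi> x / Gamma p)"
    using \<phi>_eq assms(14) Gamma_real_pos[OF p] by (auto intro!: AE_I2)
  then show ?thesis
    using inverses unfolding F_def by blast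
qed

end
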